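(* For integers $0\le k\le n-1$ and $\lambda\in\mathbb C$, \[ d^k_n(\lambda)=\big(n+(\lambda-1)\big)\,d^k_{n-1}(\lambda)-(\lambda-1)(n-k-1)\,d^k_{n-2}(\lambda), \] where the last term is interpreted as $0$ when $k=n-1$.
   Context: For $\lambda\in\mathbb C$ and integers $0\le k\le n$, define $e^k_n(\lambda)$ by $e^n_n(\lambda)=n!$ and, for $1\le k\le n$, $e^{k-1}_n(\lambda)=e^k_n(\lambda)+(\lambda-1)e^{k-1}_{n-1}(\lambda)$. Put $d^k_n(\lambda)=e^k_n(\lambda)/k!$. (For nonnegative integer $\lambda$, $d^k_n(\lambda)$ counts permutations of $[n]$ whose first $k$ entries are decreasing, where each fixed point among the last $n-k$ positions is given one of $\lambda$ colours.) *)

theory Defs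
  imports Complex_Main
begin

text \<open>Auxiliary: eaux lam n j is e^(n-j)_n(lam), indexed by the gap j = n - k.  Values with j > n are unused (set to 0).\<close>
fun eaux :: "complex \<Rightarrow> nat \<Rightarrow> nat \<Rightarrow> complex" where
  "eaux lam n 0 = of_nat (fact n)"
| "eaux lam n (Suc j) =
     (if Suc j \<le> n then eaux lam n j + (lam - 1) * eaux lam (n - 1) j else 0)"

definition e_num :: "nat \<Rightarrow> nat \<Rightarrow> complex \<Rightarrow> complex" where
  "e_num k n lam = (if k \<le> n then eaux lam n (n - k) else 0)"

definition d_num :: "nat \<Rightarrow> nat \<Rightarrow> complex \<Rightarrow> complex" where
  "d_num k n lam = e_num k n lam / of_nat (fact k)"

lemma e_num_top: "e_num n n lam = of_nat (fact n)"
  by (simp add: e_num_def)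

lemma e_num_rec:
  assumes "1 \<le> k" "k \<le> n"
  shows "e_num (k - 1) n lam = e_num k n lam + (lam - 1) * e_num (k - 1) (n - 1) lam"
proof -
  have "n - (k - 1) = Suc (n - k)" using assms by simp
  moreover have "n - 1 - (k - 1) = n - k" using assms by simp
  moreover have "Suc (n - k) \<le> n" using assms by simp
  ultimately show ?thesis using assms by (auto simp add: e_num_def)
qed

end

theory Submission
  imports Defs
begin

text \<open>Write \<open>u = \<lambda> - 1\<close> and index \<open>e\<^sup>k\<^sub>n\<close> by the gap \<open>j = n - k\<close>. Applying the defining
  recursion once in each of the rows \<open>n\<close>, \<open>n - 1\<close>, \<open>n - 2\<close> reduces the three-term recurrence at
  gap \<open>j + 1\<close> to the recurrence at gap \<open>j\<close> in rows \<open>n\<close> and \<open>n - 1\<close>, so it follows by induction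
  on the gap; dividing by \<open>k!\<close> turns it into the statement for \<open>d\<close>.\<close>

lemma eaux_Suc_Suc:
  "j \<le> n \<Longrightarrow> eaux lam (Suc n) (Suc j) = eaux lam (Suc n) j + (lam - 1) * eaux lam n j"
  by simp

lemma eaux_three_term_rec:
  assumes "j \<le> m"
  shows "eaux lam (Suc (Suc m)) (Suc (Suc j)) =
           (of_nat (Suc (Suc m)) + (lam - 1)) * eaux lam (Suc m) (Suc j)
           - (lam - 1) * of_nat (Suc j) * eaux lam m j"
  using assms
proof (induction j arbitrary: m)
  case 0
  show ?case by (simp add: algebra_simps)
next
  case (Suc j)
  then obtain m' where m: "m = Suc m'" and "j \<le> m'" by (cases m) auto
  let ?E = "eaux lam" and ?u = "lam - 1"
  have "?E (Suc (Suc m)) (Suc (Suc (Suc j))) =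
          ?E (Suc (Suc m)) (Suc (Suc j)) + ?u * ?E (Suc m) (Suc (Suc j))"
    using Suc.prems by (intro eaux_Suc_Suc) simp
  moreover have "?E (Suc m) (Suc (Suc j)) = ?E (Suc m) (Suc j) + ?u * ?E m (Suc j)"
    using Suc.prems by (intro eaux_Suc_Suc) simp
  moreover have "?E m (Suc j) = ?E m j + ?u * ?E m' j"
    unfolding m using \<open>j \<le> m'\<close> by (rule eaux_Suc_Suc)
  moreover have "?E (Suc (Suc m)) (Suc (Suc j)) =
          (of_nat (Suc (Suc m)) + ?u) * ?E (Suc m) (Suc j) - ?u * of_nat (Suc j) * ?E m j"
    using Suc.prems by (intro Suc.IH) simp
  moreover have "?E (Suc m) (Suc (Suc j)) =
          (of_nat (Suc m) + ?u) * ?E m (Suc j) - ?u * of_nat (Suc j) * ?E m' j"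
    unfolding m using \<open>j \<le> m'\<close> by (rule Suc.IH)
  \<comment> \<open>the goal lies in the ideal generated by these five identities\<close>
  ultimately show ?case
    unfolding of_nat_Suc by algebra
qed

lemma e_num_three_term_rec:
  assumes "k + 2 \<le> n"
  shows "e_num k n lam =
           (of_nat n + (lam - 1)) * e_num k (n - 1) lam
           - (lam - 1) * of_nat (n - k - 1) * e_num k (n - 2) lam"
proof -
  define m j where "m = n - 2" and "j = n - k - 2"
  have "n = Suc (Suc m)" "j \<le> m" "n - k - 1 = Suc j" "k \<le> n - 1" "k \<le> n - 2"
    using assms unfolding m_def j_def by auto
  moreover have "e_num k n lam = eaux lam (Suc (Suc m)) (Suc (Suc j))"
    "e_num k (n - 1) lam = eaux lam (Suc m) (Suc j)"
    "e_num k (n - 2) lam = eaux lam m j"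
    using assms \<open>k \<le> n - 1\<close> \<open>k \<le> n - 2\<close> unfolding m_def j_def e_num_def
    by (simp_all del: eaux.simps add: Suc_diff_Suc numeral_2_eq_2)
  ultimately show ?thesis
    using eaux_three_term_rec[of j m lam] by (simp del: eaux.simps)
qed

lemma e_num_Suc_self:
  "e_num k (Suc k) lam = (of_nat (Suc k) + (lam - 1)) * e_num k k lam"
  by (simp add: e_num_def algebra_simps)

theorem mainTheorem6:
  fixes k n :: nat and lam :: complex
  assumes "k \<le> n - 1" and "1 \<le> n"
  shows "d_num k n lam =
           (of_nat n + (lam - 1)) * d_num k (n - 1) lam
           - (if k = n - 1 then 0
              else (lam - 1) * of_nat (n - k - 1) * d_num k (n - 2) lam)"
proof (cases "k = n - 1")
  case True
  then have "n = Suc k" using assms by simp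
  then show ?thesis
    using True e_num_Suc_self[of k lam] by (simp add: d_num_def)
next
  case False
  then have "k + 2 \<le> n" using assms by simp
  then show ?thesis
    using False e_num_three_term_rec[of k n lam]
    by (simp add: d_num_def diff_divide_distrib)
qed

end
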